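(* Let $A \subset \mathbb{Z}$ be a finite set with $\min A = 0$, $\max A = b$, and $\gcd A = 1$. For $v \in \{0, b\}$ let $T_v(A) = \bigcup_{h \geq 0} h(A - v)$ and $\sigma_v(x) = \sum_{a \in T_v(A)} x^a$. Then both $\sigma_0(x)$ and $\sigma_b(x)$ are rational functions of $x$, and for all integers $h \geq 0$ with $h \geq 2b - 4$, \[ \sigma_{hA}(x) = \sigma_0(x) + x^{hb}\,\sigma_b(x), \] where $\sigma_{hA}(x) = \sum_{a \in hA} x^a$.
   Context: For a finite set $B \subset \mathbb{Z}$ and integer $h \geq 0$, $hB = \{b_1 + \cdots + b_h : b_i \in B\}$, with $0B = \{0\}$, and $A - v = \{a - v : a \in A\}$. Note $T_0(A) \subseteq \mathbb{N}$ so $\sigma_0$ is a formal power series in $x$, while $T_b(A) \subseteq -\mathbb{N}$ so $\sigma_b$ is a formal power series in $x^{-1}$; "rational function" means these series are expansions of rational functions in $x$, and the displayed identity is an identity of rational functions. Here $\mathbb{N} = \{0,1,2,\ldots\}$. *)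

theory Defs
  imports "HOL-Computational_Algebra.Computational_Algebra"
begin

fun sumset :: "nat \<Rightarrow> int set \<Rightarrow> int set" where
  "sumset 0 B = {0}"
| "sumset (Suc h) B = {s + c | s c. s \<in> sumset h B \<and> c \<in> B}"

definition Tset :: "int set \<Rightarrow> int \<Rightarrow> int set" where
  "Tset A v = (\<Union>h. sumset h ((\<lambda>a. a - v) ` A))"

definition sigma0_fps :: "int set \<Rightarrow> complex fps" where
  "sigma0_fps A = Abs_fps (\<lambda>n. if int n \<in> Tset A 0 then 1 else 0)"

(* sigma_b as a formal power series in y = x^{-1}: coefficient n is 1 iff -n \<in> T_b(A) *)
definition sigmab_fps :: "int set \<Rightarrow> int \<Rightarrow> complex fps" where
  "sigmab_fps A b = Abs_fps (\<lambda>n. if - int n \<in> Tset A b then 1 else 0)"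

definition expands_rational :: "complex fps \<Rightarrow> complex poly \<Rightarrow> complex poly \<Rightarrow> bool" where
  "expands_rational S p q \<longleftrightarrow> coeff q 0 \<noteq> 0 \<and> fps_of_poly q * S = fps_of_poly p"

definition sigma_set :: "int set \<Rightarrow> complex \<Rightarrow> complex" where
  "sigma_set S x = (\<Sum>a\<in>S. x powi a)"

end

theory Submission
  imports Defs
begin

text \<open>
  Let \<open>S = T\<^sub>0(A)\<close> be the additive monoid generated by \<open>A\<close> and \<open>S' = -T\<^sub>b(A)\<close> the one
  generated by \<open>b - A\<close>. Cutting blocks whose sum is divisible by \<open>b\<close> out of a sum of elements
  of \<open>A\<close> (pigeonhole on prefix sums modulo \<open>b\<close>) shows that every element of \<open>S\<close> is \<open>m b\<close> plus a
  sum of fewer than \<open>b\<close> elements of \<open>A \<inter> (0, b)\<close>. Since \<open>gcd A = 1\<close> these short sums meet every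
  residue class modulo \<open>b\<close>, so \<open>S\<close> contains every integer \<open>n\<close> with \<open>n + b > (b - 1)\<^sup>2\<close>, and
  likewise for \<open>S'\<close>. For \<open>h \<ge> 2b - 4\<close> the same two facts give \<open>hA = S \<inter> (hb - S')\<close> and
  \<open>S \<union> (hb - S') = \<int>\<close>, so \<open>{0, \<dots>, hb}\<close> is the disjoint union of \<open>hA\<close>, the finitely many
  gaps of \<open>S\<close>, and \<open>hb\<close> minus the gaps of \<open>S'\<close>. As \<open>\<sigma>\<^sub>S = 1/(1 - x) - \<Sum>\<^bsub>gaps\<^esub> x\<^sup>k\<close>,
  the identity reduces to a finite geometric sum.
\<close>

section \<open>Sumsets and the monoid they generate\<close>

definition sumsets :: "int set \<Rightarrow> int set" where
  "sumsets B = (\<Union>h. sumset h B)"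

lemma mem_sumset_Suc_iff [simp]: "y \<in> sumset (Suc h) B \<longleftrightarrow> (\<exists>a\<in>B. y - a \<in> sumset h B)"
  by force

declare sumset.simps(2) [simp del]

lemma sumset_eq_sum_list: "sumset h B = {sum_list xs | xs. length xs = h \<and> set xs \<subseteq> B}"
proof (induction h)
  case (Suc h)
  show ?case
  proof (intro set_eqI iffI)
    fix y assume "y \<in> sumset (Suc h) B"
    then obtain c xs where "y = c + sum_list xs" "length xs = h" "set xs \<subseteq> B" "c \<in> B"
      using Suc.IH by (auto simp: algebra_simps)
    then show "y \<in> {sum_list xs | xs. length xs = Suc h \<and> set xs \<subseteq> B}"
      by (intro CollectI exI[of _ "c # xs"]) auto
  next
    fix y assume "y \<in> {sum_list xs | xs. length xs = Suc h \<and> set xs \<subseteq> B}"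
    then obtain c xs where "y = c + sum_list xs" "length xs = h" "set xs \<subseteq> B" "c \<in> B"
      by (auto simp: length_Suc_conv)
    then show "y \<in> sumset (Suc h) B"
      using Suc.IH by (auto intro!: bexI[of _ c])
  qed
qed simp

lemma sum_list_mem_sumset: "set xs \<subseteq> B \<Longrightarrow> sum_list xs \<in> sumset (length xs) B"
  by (auto simp: sumset_eq_sum_list)

lemma sumset_add: "x \<in> sumset h B \<Longrightarrow> y \<in> sumset k B \<Longrightarrow> x + y \<in> sumset (h + k) B"
proof (induction k arbitrary: y)
  case (Suc k)
  then obtain a where "a \<in> B" "y - a \<in> sumset k B" by auto
  with Suc.IH[of "y - a"] Suc.prems(1) show ?case
    by (auto intro!: bexI[of _ a] simp: algebra_simps)
qed simp

lemma zero_mem_sumset: "0 \<in> B \<Longrightarrow> 0 \<in> sumset h B"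
  by (induction h) (auto intro!: bexI[of _ 0])

lemma sumset_mono:
  assumes "0 \<in> B" "p \<le> h"
  shows "sumset p B \<subseteq> sumset h B"
proof
  fix x assume "x \<in> sumset p B"
  then have "x + 0 \<in> sumset (p + (h - p)) B"
    using sumset_add zero_mem_sumset assms(1) by blast
  then show "x \<in> sumset h B" using assms(2) by simp
qed

lemma mem_sumset_reflect_iff: "x \<in> sumset h ((\<lambda>a. c - a) ` B) \<longleftrightarrow> int h * c - x \<in> sumset h B"
  by (induction h arbitrary: x) (auto simp: algebra_simps)

lemma replicate_append_mem_sumset:
  assumes "b \<in> B" "set js \<subseteq> B"
  shows "int m * b + sum_list js \<in> sumset (m + length js) B"
proof -
  have "set (replicate m b @ js) \<subseteq> B" using assms by auto
  from sum_list_mem_sumset[OF this] show ?thesis by (simp add: sum_list_replicate)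
qed

lemma mem_sumsets_iff: "x \<in> sumsets B \<longleftrightarrow> (\<exists>xs. set xs \<subseteq> B \<and> x = sum_list xs)"
  by (auto simp: sumsets_def sumset_eq_sum_list)

lemma sumset_subset_sumsets: "sumset h B \<subseteq> sumsets B"
  unfolding sumsets_def by blast

lemma zero_mem_sumsets: "0 \<in> sumsets B"
  using sumset_subset_sumsets[of 0 B] by simp

lemma subset_sumsets: "B \<subseteq> sumsets B"
proof
  fix x assume "x \<in> B"
  then show "x \<in> sumsets B" unfolding mem_sumsets_iff by (intro exI[of _ "[x]"]) simp
qed

lemma sumsets_add: "x \<in> sumsets B \<Longrightarrow> y \<in> sumsets B \<Longrightarrow> x + y \<in> sumsets B"
  unfolding sumsets_def using sumset_add by blast

lemma of_nat_mult_mem_sumsets: "x \<in> sumsets B \<Longrightarrow> int k * x \<in> sumsets B"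
  by (induction k) (simp_all add: zero_mem_sumsets sumsets_add distrib_right)

lemma sumsets_nonneg: "B \<subseteq> {0..} \<Longrightarrow> sumsets B \<subseteq> {0..}"
  by (force simp: mem_sumsets_iff intro!: sum_list_nonneg)

lemma sigma0_fps_eq: "sigma0_fps A = Abs_fps (\<lambda>n. if int n \<in> sumsets A then 1 else 0)"
  by (simp add: sigma0_fps_def Tset_def sumsets_def)

lemma sigmab_fps_eq:
  "sigmab_fps A b = Abs_fps (\<lambda>n. if int n \<in> sumsets ((\<lambda>a. b - a) ` A) then 1 else 0)"
proof -
  have "(\<lambda>a. a - b) ` A = (\<lambda>a. 0 - a) ` (\<lambda>a. b - a) ` A" by (simp add: image_image)
  then have "- int n \<in> Tset A b \<longleftrightarrow> int n \<in> sumsets ((\<lambda>a. b - a) ` A)" for n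
    unfolding Tset_def sumsets_def using mem_sumset_reflect_iff[of "- int n" _ 0] by simp
  then show ?thesis by (simp add: sigmab_fps_def)
qed

section \<open>Short representations\<close>

lemma exists_block_dvd_sum_list:
  fixes ys :: "int list"
  assumes "0 < b" "b \<le> int (length ys)"
  shows "\<exists>us vs ws. ys = us @ vs @ ws \<and> vs \<noteq> [] \<and> b dvd sum_list vs"
proof -
  define f where "f i = sum_list (take i ys) mod b" for i
  have "f ` {0..nat b} \<subseteq> {0..<b}" using assms(1) by (auto simp: f_def)
  then have "card (f ` {0..nat b}) < card {0..nat b}"
    using assms(1) card_mono[of "{0..<b}" "f ` {0..nat b}"] by simp
  then obtain i j where "i \<le> nat b" "j \<le> nat b" "i \<noteq> j" "f i = f j"
    using pigeonhole[of f "{0..nat b}"] unfolding inj_on_def by auto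
  then obtain i j where ij: "i < j" "j \<le> nat b" "f i = f j"
    by (metis linorder_neqE_nat order.strict_trans2)
  define vs where "vs = take (j - i) (drop i ys)"
  have take_j: "take j ys = take i ys @ vs"
    unfolding vs_def using take_add[of i "j - i" ys] ij(1) by simp
  have "ys = take i ys @ vs @ drop j ys"
    using take_j append_take_drop_id[of j ys] by simp
  moreover have "vs \<noteq> []" unfolding vs_def using ij assms(2) by simp
  moreover have "b dvd sum_list vs"
    using ij(3) take_j by (simp add: f_def mod_eq_dvd_iff)
  ultimately show ?thesis by blast
qed

lemma sum_list_interior_bounds:
  fixes js :: "int list"
  assumes "set js \<subseteq> {0<..<b}"
  shows "int (length js) \<le> sum_list js" "sum_list js \<le> int (length js) * (b - 1)"
  using assms by (induction js) (auto simp: algebra_simps)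

lemma sum_list_interior_decompose:
  fixes ys :: "int list"
  assumes "0 < b"
  shows "set ys \<subseteq> {0<..<b} \<Longrightarrow>
    \<exists>m js. set js \<subseteq> set ys \<and> int (length js) < b \<and> sum_list ys = int m * b + sum_list js"
proof (induction ys rule: length_induct)
  case (1 ys)
  show ?case
  proof (cases "int (length ys) < b")
    case True
    then show ?thesis by (intro exI[of _ 0] exI[of _ ys]) simp
  next
    case False
    then obtain us vs ws where split: "ys = us @ vs @ ws" "vs \<noteq> []" "b dvd sum_list vs"
      using exists_block_dvd_sum_list[OF assms] by (meson not_less)
    then obtain k where k: "sum_list vs = b * k" by blast
    have vs: "set vs \<subseteq> {0<..<b}" using split(1) "1.prems" by auto
    have "0 < int (length vs)" using split(2) by simp
    then have "0 < sum_list vs" using sum_list_interior_bounds(1)[OF vs] by linarith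
    then have "0 < k" using k assms by (simp add: zero_less_mult_iff)
    have "length (us @ ws) < length ys" "set (us @ ws) \<subseteq> {0<..<b}"
      using split(1,2) "1.prems" by auto
    then obtain m js where js: "set js \<subseteq> set (us @ ws)" "int (length js) < b"
        "sum_list (us @ ws) = int m * b + sum_list js"
      using "1.IH" by blast
    show ?thesis
    proof (intro exI conjI)
      show "set js \<subseteq> set ys" using js(1) split(1) by auto
      show "sum_list ys = int (m + nat k) * b + sum_list js"
        using js(3) split(1) k \<open>0 < k\<close> by (simp add: algebra_simps)
    qed (fact js(2))
  qed
qed

lemma sum_list_split_endpoints:
  fixes xs :: "int list"
  shows "set xs \<subseteq> {0..b} \<Longrightarrow>
    sum_list xs = int (length (filter ((=) b) xs)) * b + sum_list (filter (\<lambda>a. 0 < a \<and> a < b) xs)"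
  by (induction xs) (auto simp: algebra_simps)

lemma sumsets_decompose:
  assumes "B \<subseteq> {0..b}" "0 < b" "n \<in> sumsets B"
  shows "\<exists>m js. set js \<subseteq> B \<inter> {0<..<b} \<and> int (length js) < b \<and> n = int m * b + sum_list js"
proof -
  obtain xs where xs: "set xs \<subseteq> B" "n = sum_list xs"
    using assms(3) by (auto simp: mem_sumsets_iff)
  define ys where "ys = filter (\<lambda>a. 0 < a \<and> a < b) xs"
  have "set ys \<subseteq> {0<..<b}" by (auto simp: ys_def)
  then obtain m js where "set js \<subseteq> set ys" "int (length js) < b" "sum_list ys = int m * b + sum_list js"
    using sum_list_interior_decompose[OF assms(2)] by blast
  moreover have "n = int (length (filter ((=) b) xs)) * b + sum_list ys"
    unfolding xs(2) ys_def using xs(1) assms(1) by (intro sum_list_split_endpoints) auto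
  moreover have "set ys \<subseteq> B \<inter> {0<..<b}" using xs(1) by (auto simp: ys_def)
  ultimately show ?thesis
    by (intro exI[of _ "length (filter ((=) b) xs) + m"] exI[of _ js]) (auto simp: algebra_simps)
qed

lemma mem_sumsets_imp_short_sumset:
  assumes "B \<subseteq> {0..b}" "b \<in> B" "0 < b" "n \<in> sumsets B"
  shows "\<exists>k. n \<in> sumset k B \<and> int k * b \<le> n + (b - 1)\<^sup>2"
proof -
  obtain m js where js: "set js \<subseteq> B \<inter> {0<..<b}" "int (length js) < b"
      and n: "n = int m * b + sum_list js"
    using sumsets_decompose[OF assms(1,3,4)] by blast
  have "int (length js) * b = int (length js) + int (length js) * (b - 1)"
    by (simp add: algebra_simps)
  also have "\<dots> \<le> sum_list js + (b - 1)\<^sup>2"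
    using sum_list_interior_bounds(1)[of js b] js assms(3)
    by (intro add_mono) (auto simp: power2_eq_square mult_right_mono)
  finally have "int (m + length js) * b \<le> n + (b - 1)\<^sup>2"
    using n by (simp add: algebra_simps)
  moreover have "n \<in> sumset (m + length js) B"
    using replicate_append_mem_sumset[OF assms(2)] js(1) n by simp
  ultimately show ?thesis by blast
qed

section \<open>Residues and gaps\<close>

lemma Gcd_mem_ideal:
  fixes I :: "int set"
  assumes "0 \<in> I" "\<And>x y. x \<in> I \<Longrightarrow> y \<in> I \<Longrightarrow> x + y \<in> I" "\<And>u x. x \<in> I \<Longrightarrow> u * x \<in> I"
  shows "finite C \<Longrightarrow> C \<subseteq> I \<Longrightarrow> Gcd C \<in> I"
proof (induction C rule: finite_induct)
  case (insert a C)
  obtain u v where "u * a + v * Gcd C = gcd a (Gcd C)" using bezout_int by blast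
  with insert assms show ?case by (metis Gcd_insert insert_subset)
qed (simp add: assms(1))

lemma Gcd_reflect:
  fixes B :: "int set"
  assumes "0 \<in> B" "b \<in> B"
  shows "Gcd ((\<lambda>a. b - a) ` B) = Gcd B"
proof (rule zdvd_antisym_nonneg)
  have "Gcd ((\<lambda>a. b - a) ` B) dvd b - (b - a)" if "a \<in> B" for a
    using dvd_diff[OF Gcd_dvd[OF imageI[OF assms(1)]] Gcd_dvd[OF imageI[OF that]], of "\<lambda>a. b - a"]
    by simp
  then show "Gcd ((\<lambda>a. b - a) ` B) dvd Gcd B" by (auto intro: Gcd_greatest)
  show "Gcd B dvd Gcd ((\<lambda>a. b - a) ` B)"
  proof (rule Gcd_greatest)
    fix x assume "x \<in> (\<lambda>a. b - a) ` B"
    then obtain a where "a \<in> B" "x = b - a" by blast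
    then show "Gcd B dvd x" using assms(2) by (simp add: dvd_diff Gcd_dvd)
  qed
qed simp_all

lemma reflected_set_props:
  fixes B :: "int set"
  assumes "finite B" "Gcd B = 1" "B \<subseteq> {0..b}" "0 \<in> B" "b \<in> B"
  shows "finite ((\<lambda>a. b - a) ` B)" "Gcd ((\<lambda>a. b - a) ` B) = 1" "(\<lambda>a. b - a) ` B \<subseteq> {0..b}"
    "0 \<in> (\<lambda>a. b - a) ` B" "b \<in> (\<lambda>a. b - a) ` B"
  using assms Gcd_reflect[OF assms(4,5)] image_eqI[of 0 "\<lambda>a. b - a" b B] image_eqI[of b "\<lambda>a. b - a" 0 B]
  by auto

lemma sumsets_meets_every_residue:
  assumes "finite B" "Gcd B = 1" "0 < b"
  shows "\<exists>s\<in>sumsets B. b dvd r - s"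
proof -
  define I where "I = {x. \<exists>s\<in>sumsets B. b dvd x - s}"
  have sumsets_I: "s \<in> I" if "s \<in> sumsets B" for s
    using that unfolding I_def by (intro CollectI bexI[of _ s]) simp_all
  have add_I: "x + y \<in> I" if "x \<in> I" "y \<in> I" for x y
  proof -
    obtain s t where "s \<in> sumsets B" "t \<in> sumsets B" "b dvd x - s" "b dvd y - t"
      using \<open>x \<in> I\<close> \<open>y \<in> I\<close> unfolding I_def by blast
    then have "s + t \<in> sumsets B" "b dvd (x + y) - (s + t)"
      using sumsets_add dvd_add[of b "x - s" "y - t"] by (auto simp: algebra_simps)
    then show ?thesis by (auto simp: I_def)
  qed
  have mult_I: "u * x \<in> I" if "x \<in> I" for u x
  proof -
    obtain s where s: "s \<in> sumsets B" "b dvd x - s" using \<open>x \<in> I\<close> by (auto simp: I_def)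
    define k where "k = nat (u mod b)"
    have "u * x - int k * s = u * (x - s) + (u - u mod b) * s"
      using assms(3) by (simp add: k_def algebra_simps)
    then have "b dvd u * x - int k * s" using s(2) by simp
    then show ?thesis using of_nat_mult_mem_sumsets[OF s(1)] unfolding I_def by blast
  qed
  have "Gcd B \<in> I"
    using Gcd_mem_ideal[OF sumsets_I[OF zero_mem_sumsets] add_I mult_I assms(1)]
      sumsets_I subset_sumsets by blast
  then have "r * 1 \<in> I" using assms(2) mult_I by metis
  then show ?thesis by (simp add: I_def)
qed

lemma not_mem_sumsets_bound:
  assumes "finite B" "Gcd B = 1" "B \<subseteq> {0..b}" "b \<in> B" "0 < b" "n \<notin> sumsets B"
  shows "n + b \<le> (b - 1)\<^sup>2"
proof -
  obtain s where "s \<in> sumsets B" "b dvd n - s"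
    using sumsets_meets_every_residue[OF assms(1,2,5)] by blast
  then obtain m js where js: "set js \<subseteq> B \<inter> {0<..<b}" "int (length js) < b"
      and "b dvd n - (int m * b + sum_list js)"
    using sumsets_decompose[OF assms(3,5)] by blast
  moreover have "n - sum_list js = (n - (int m * b + sum_list js)) + b * int m" by simp
  ultimately have dvd: "b dvd n - sum_list js" by (metis dvd_add dvd_triv_left)
  have "n < sum_list js"
  proof (rule ccontr)
    assume "\<not> n < sum_list js"
    moreover obtain k where k: "n - sum_list js = b * k" using dvd by blast
    ultimately have "0 \<le> b * k" by linarith
    then have "0 \<le> k" using assms(5) by (simp add: zero_le_mult_iff)
    then have "n = int (nat k) * b + sum_list js" using k by (simp add: algebra_simps)
    moreover have "int (nat k) * b + sum_list js \<in> sumset (nat k + length js) B"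
      using js(1) by (intro replicate_append_mem_sumset[OF assms(4)]) auto
    ultimately show False using assms(6) sumset_subset_sumsets by blast
  qed
  then have "n + b \<le> sum_list js"
    using zdvd_imp_le[of b "sum_list js - n"] dvd by (simp add: dvd_diff_commute)
  also have "\<dots> \<le> int (length js) * (b - 1)"
    using sum_list_interior_bounds(2) js(1) by blast
  also have "\<dots> \<le> (b - 1) * (b - 1)"
    using js(2) assms(5) by (intro mult_right_mono) auto
  finally show ?thesis by (simp add: power2_eq_square)
qed

definition gaps :: "int set \<Rightarrow> nat set" where
  "gaps S = {n. int n \<notin> S}"

lemma finite_gaps_sumsets:
  assumes "finite B" "Gcd B = 1" "B \<subseteq> {0..b}" "b \<in> B" "0 < b"
  shows "finite (gaps (sumsets B))"
proof (rule finite_subset)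
  show "gaps (sumsets B) \<subseteq> {..nat ((b - 1)\<^sup>2)}"
  proof
    fix n assume "n \<in> gaps (sumsets B)"
    then have "int n + b \<le> (b - 1)\<^sup>2" using not_mem_sumsets_bound[OF assms] by (simp add: gaps_def)
    then show "n \<in> {..nat ((b - 1)\<^sup>2)}" using assms(5) by simp
  qed
qed simp

section \<open>The structure of \<open>hA\<close>\<close>

lemma mem_sumset_iff_sumsets:
  assumes "B \<subseteq> {0..b}" "0 \<in> B" "b \<in> B" "0 < b" "2 * b - 4 \<le> int h"
  shows "n \<in> sumset h B \<longleftrightarrow> n \<in> sumsets B \<and> int h * b - n \<in> sumsets ((\<lambda>a. b - a) ` B)"
proof
  assume "n \<in> sumset h B"
  then show "n \<in> sumsets B \<and> int h * b - n \<in> sumsets ((\<lambda>a. b - a) ` B)"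
    using mem_sumset_reflect_iff[of "int h * b - n" h b B] sumset_subset_sumsets by auto
next
  define B' where "B' = (\<lambda>a. b - a) ` B"
  have B': "B' \<subseteq> {0..b}" "0 \<in> B'" "b \<in> B'"
    using assms(1-3) unfolding B'_def by force+
  assume "n \<in> sumsets B \<and> int h * b - n \<in> sumsets ((\<lambda>a. b - a) ` B)"
  then obtain k k' where k: "n \<in> sumset k B" "int k * b \<le> n + (b - 1)\<^sup>2"
    and k': "int h * b - n \<in> sumset k' B'" "int k' * b \<le> int h * b - n + (b - 1)\<^sup>2"
    using mem_sumsets_imp_short_sumset[OF assms(1,3,4)]
      mem_sumsets_imp_short_sumset[OF B'(1,3) assms(4)]
    unfolding B'_def by meson
  consider "k \<le> h" | "k' \<le> h" | "h < k" "h < k'" by linarith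
  then show "n \<in> sumset h B"
  proof cases
    case 1
    then show ?thesis using k(1) sumset_mono[OF assms(2)] by blast
  next
    case 2
    then have "int h * b - n \<in> sumset h B'" using k'(1) sumset_mono[OF B'(2)] by blast
    then show ?thesis using mem_sumset_reflect_iff unfolding B'_def by fastforce
  next
    case 3
    then have "(int h + 1) * b \<le> int k * b" "(int h + 1) * b \<le> int k' * b"
      using assms(4) by (intro mult_right_mono; simp)+
    then have "(int h + 2) * b \<le> 2 * (b - 1)\<^sup>2" using k(2) k'(2) by (simp add: algebra_simps)
    moreover have "(2 * b - 2) * b \<le> (int h + 2) * b"
      using assms(4,5) by (intro mult_right_mono) auto
    ultimately have "b = 1" using assms(4) by (simp add: power2_eq_square algebra_simps)
    with \<open>(int h + 2) * b \<le> 2 * (b - 1)\<^sup>2\<close> show ?thesis by simp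
  qed
qed

lemma sumsets_cover:
  assumes "finite B" "Gcd B = 1" "B \<subseteq> {0..b}" "0 \<in> B" "b \<in> B" "0 < b" "2 * b - 4 \<le> int h"
  shows "n \<in> sumsets B \<or> int h * b - n \<in> sumsets ((\<lambda>a. b - a) ` B)"
proof (rule ccontr)
  assume "\<not> (n \<in> sumsets B \<or> int h * b - n \<in> sumsets ((\<lambda>a. b - a) ` B))"
  then have "n + b \<le> (b - 1)\<^sup>2" "int h * b - n + b \<le> (b - 1)\<^sup>2"
    using not_mem_sumsets_bound[OF assms(1-3,5,6)]
      not_mem_sumsets_bound[OF reflected_set_props(1-3,5)[OF assms(1-5)] assms(6)] by blast+
  moreover have "(2 * b - 4) * b \<le> int h * b"
    using assms(6,7) by (intro mult_right_mono) auto
  ultimately have "b = 1" using assms(6) by (simp add: power2_eq_square algebra_simps)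
  with \<open>n + b \<le> (b - 1)\<^sup>2\<close> \<open>int h * b - n + b \<le> (b - 1)\<^sup>2\<close> show False by simp
qed

section \<open>Generating functions\<close>

definition gap_poly :: "int set \<Rightarrow> complex poly" where
  "gap_poly S = (\<Sum>k\<in>gaps S. monom 1 k)"

lemma expands_rational_indicator:
  assumes "finite (gaps S)"
  shows "expands_rational (Abs_fps (\<lambda>n. if int n \<in> S then 1 else 0))
           (1 - [:1, -1:] * gap_poly S) [:1, -1:]"
proof -
  define P where "P = fps_of_poly (gap_poly S)"
  have q: "fps_of_poly [:1, -1 :: complex:] = 1 - fps_X"
    by (simp add: fps_of_poly_pCons)
  have ones: "(1 - fps_X) * Abs_fps (\<lambda>n. 1 :: complex) = 1"
    by (rule fps_ext) (simp add: algebra_simps)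
  have "Abs_fps (\<lambda>n. if int n \<in> S then 1 else 0) = Abs_fps (\<lambda>n. 1) - P"
    using assms by (intro fps_ext) (simp add: P_def gap_poly_def coeff_sum gaps_def)
  then have "fps_of_poly [:1, -1:] * Abs_fps (\<lambda>n. if int n \<in> S then 1 else 0) = 1 - (1 - fps_X) * P"
    by (simp add: q right_diff_distrib ones)
  also have "\<dots> = fps_of_poly (1 - [:1, -1:] * gap_poly S)"
    by (simp only: fps_of_poly_diff fps_of_poly_mult fps_of_poly_1 q P_def)
  finally show ?thesis by (simp add: expands_rational_def)
qed

lemma poly_gap_quotient:
  fixes x :: complex
  assumes "x \<noteq> 1"
  shows "poly (1 - [:1, -1:] * gap_poly S) x / poly [:1, -1:] x = 1 / (1 - x) - (\<Sum>k\<in>gaps S. x ^ k)"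
proof -
  have "1 - x \<noteq> 0" using assms by simp
  then show ?thesis by (simp add: gap_poly_def poly_sum poly_monom field_simps)
qed

text \<open>A truncation of the formal identity \<open>\<Sum>\<^bsub>n\<in>\<int>\<^esub> x\<^sup>n = 1/(1 - x) + x\<^sup>-\<^sup>1/(1 - x\<^sup>-\<^sup>1) = 0\<close>.\<close>

lemma sum_powi_interval:
  fixes x :: complex
  assumes "x \<noteq> 0" "x \<noteq> 1"
  shows "(\<Sum>n\<in>{0..int H}. x powi n) = 1 / (1 - x) + x ^ H * (1 / (1 - inverse x))"
proof -
  have "(\<Sum>n\<in>{0..int H}. x powi n) = (\<Sum>k\<le>H. x ^ k)"
    by (subst image_int_atLeastAtMost[of 0 H, simplified, symmetric])
       (simp add: sum.reindex atLeast0AtMost)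
  also have "\<dots> = (1 - x ^ Suc H) / (1 - x)"
    using assms(2) by (simp add: sum_gp0)
  also have "\<dots> = 1 / (1 - x) + x ^ H * (1 / (1 - inverse x))"
  proof -
    have "1 - x \<noteq> 0" using assms(2) by simp
    moreover have "1 - inverse x = - (1 - x) / x" using assms(1) by (simp add: field_simps)
    ultimately have "x ^ H * (1 / (1 - inverse x)) = - (x ^ Suc H) / (1 - x)"
      using assms(1) by (simp add: field_simps)
    then show ?thesis by (simp add: diff_divide_distrib)
  qed
  finally show ?thesis .
qed

lemma sigma_set_eq_gap_sums:
  fixes T S S' :: "int set" and x :: complex
  assumes nonneg: "S \<subseteq> {0..}" "S' \<subseteq> {0..}"
    and T: "\<And>n. n \<in> T \<longleftrightarrow> n \<in> S \<and> int H - n \<in> S'"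
    and cover: "\<And>n. n \<in> S \<or> int H - n \<in> S'"
    and fin: "finite (gaps S)" "finite (gaps S')"
    and x: "x \<noteq> 0" "x \<noteq> 1"
  shows "sigma_set T x = (1 / (1 - x) - (\<Sum>k\<in>gaps S. x ^ k))
    + x ^ H * (1 / (1 - inverse x) - (\<Sum>k\<in>gaps S'. inverse x ^ k))"
proof -
  define G where "G = int ` gaps S"
  define G' where "G' = (\<lambda>k. int H - int k) ` gaps S'"
  have G: "n \<in> G \<longleftrightarrow> 0 \<le> n \<and> n \<notin> S" for n
    using zero_le_imp_eq_int[of n] by (auto simp: G_def gaps_def)
  have G': "n \<in> G' \<longleftrightarrow> n \<le> int H \<and> int H - n \<notin> S'" for n
    using zero_le_imp_eq_int[of "int H - n"] by (force simp: G'_def gaps_def)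
  have interval: "{0..int H} = T \<union> G \<union> G'"
    using T cover nonneg G G' by fastforce
  have disjoint: "T \<inter> G = {}" "(T \<union> G) \<inter> G' = {}"
    using T cover G G' by auto
  have finite: "finite T" "finite G" "finite G'"
    using finite_subset[OF _ finite_atLeastAtMost_int] interval fin
    by (auto simp: G_def G'_def)
  have "(\<Sum>n\<in>{0..int H}. x powi n) = sigma_set T x + (\<Sum>n\<in>G. x powi n) + (\<Sum>n\<in>G'. x powi n)"
    unfolding interval sigma_set_def using disjoint finite by (simp add: sum.union_disjoint)
  also have "(\<Sum>n\<in>G. x powi n) = (\<Sum>k\<in>gaps S. x ^ k)"
    by (simp add: G_def sum.reindex)
  also have "(\<Sum>n\<in>G'. x powi n) = x ^ H * (\<Sum>k\<in>gaps S'. inverse x ^ k)"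
    using x(1) by (simp add: G'_def sum.reindex inj_on_def sum_distrib_left power_int_diff
        power_inverse divide_inverse)
  finally show ?thesis
    using sum_powi_interval[OF x] by (simp add: algebra_simps)
qed

lemma sigma_sumset_closed_form:
  fixes x :: complex
  assumes "finite A" "Gcd A = 1" "A \<subseteq> {0..b}" "0 \<in> A" "b \<in> A" "0 < b" "2 * b - 4 \<le> int h"
    and "x \<noteq> 0" "x \<noteq> 1"
  shows "sigma_set (sumset h A) x = (1 / (1 - x) - (\<Sum>k\<in>gaps (sumsets A). x ^ k))
    + x powi (int h * b) * (1 / (1 - inverse x)
        - (\<Sum>k\<in>gaps (sumsets ((\<lambda>a. b - a) ` A)). inverse x ^ k))"
proof -
  note reflected = reflected_set_props[OF assms(1-5)]
  have H: "int (h * nat b) = int h * b" using assms(6) by simp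
  have "sigma_set (sumset h A) x = (1 / (1 - x) - (\<Sum>k\<in>gaps (sumsets A). x ^ k))
    + x ^ (h * nat b) * (1 / (1 - inverse x)
        - (\<Sum>k\<in>gaps (sumsets ((\<lambda>a. b - a) ` A)). inverse x ^ k))"
  proof (rule sigma_set_eq_gap_sums)
    show "n \<in> sumset h A \<longleftrightarrow> n \<in> sumsets A \<and> int (h * nat b) - n \<in> sumsets ((\<lambda>a. b - a) ` A)"
      for n unfolding H by (rule mem_sumset_iff_sumsets[OF assms(3-7)])
    show "n \<in> sumsets A \<or> int (h * nat b) - n \<in> sumsets ((\<lambda>a. b - a) ` A)"
      for n unfolding H by (rule sumsets_cover[OF assms(1-7)])
  qed (use assms reflected in \<open>auto intro!: sumsets_nonneg finite_gaps_sumsets\<close>)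
  moreover have "x powi (int h * b) = x ^ (h * nat b)" using H by (metis power_int_of_nat)
  ultimately show ?thesis by simp
qed

theorem theorem5p1:
  fixes A :: "int set" and b :: int
  assumes "finite A" and "A \<noteq> {}" and "Min A = 0" and "Max A = b" and "Gcd A = 1"
  shows "\<exists>p0 q0 pb qb.
           expands_rational (sigma0_fps A) p0 q0 \<and>
           expands_rational (sigmab_fps A b) pb qb \<and>
           (\<forall>h::nat. int h \<ge> 2 * b - 4 \<longrightarrow>
              (\<forall>x::complex. x \<noteq> 0 \<and> poly q0 x \<noteq> 0 \<and> poly qb (inverse x) \<noteq> 0 \<longrightarrow>
                 sigma_set (sumset h A) x
                   = poly p0 x / poly q0 x + x powi (int h * b) * (poly pb (inverse x) / poly qb (inverse x))))"
proof -
  have A: "A \<subseteq> {0..b}" "0 \<in> A" "b \<in> A"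
    using Min_le[OF assms(1)] Max_ge[OF assms(1)] Min_in[OF assms(1,2)] Max_in[OF assms(1,2)] assms(3,4)
    by auto
  have "0 < b"
  proof (rule ccontr)
    assume "\<not> 0 < b"
    then have "A = {0}" using A by auto
    then show False using assms(5) by simp
  qed
  define S S' where "S = sumsets A" and "S' = sumsets ((\<lambda>a. b - a) ` A)"
  have fin: "finite (gaps S)" "finite (gaps S')"
    unfolding S_def S'_def using reflected_set_props[OF assms(1,5) A] assms(1,5) A \<open>0 < b\<close>
    by (auto intro!: finite_gaps_sumsets)
  show ?thesis
  proof (rule exI[of _ "1 - [:1, -1:] * gap_poly S"], rule exI[of _ "[:1, -1:]"],
      rule exI[of _ "1 - [:1, -1:] * gap_poly S'"], rule exI[of _ "[:1, -1:]"], intro conjI allI impI)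
    fix h :: nat and x :: complex
    assume "2 * b - 4 \<le> int h" and "x \<noteq> 0 \<and> poly [:1, -1:] x \<noteq> 0 \<and> poly [:1, -1:] (inverse x) \<noteq> 0"
    then have "x \<noteq> 0" "x \<noteq> 1" "inverse x \<noteq> 1" by auto
    then show "sigma_set (sumset h A) x = poly (1 - [:1, -1:] * gap_poly S) x / poly [:1, -1:] x
        + x powi (int h * b) * (poly (1 - [:1, -1:] * gap_poly S') (inverse x) / poly [:1, -1:] (inverse x))"
      unfolding poly_gap_quotient[OF \<open>x \<noteq> 1\<close>] poly_gap_quotient[OF \<open>inverse x \<noteq> 1\<close>] S_def S'_def
      using sigma_sumset_closed_form[OF assms(1,5) A \<open>0 < b\<close> \<open>2 * b - 4 \<le> int h\<close>] by blast
  qed (simp_all only: sigma0_fps_eq[of A, folded S_def] sigmab_fps_eq[of A b, folded S'_def]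
      expands_rational_indicator fin)
qed

end
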